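(* Let $p\in[1,\infty)$ and $\rho\in\mathfrak M_+(\mathsf X\times\mathsf X)$. Let $E_0\subseteq\mathsf X$ be $\mathfrak m$-measurable, $(\mathsf Y,\mathsf d_{\mathsf Y})$ a metric space, $f\in\mathfrak M(E_0,\mathsf Y)$, and $E\Subset E_0$ $\mathfrak m$-measurable. Suppose there is $R>0$ with $\mathrm B(E,R)\subseteq E_0$ and a function $G:E_0\times(0,R]\to[0,+\infty]$ such that: (i) for every $r\in(0,R]$, $G(\cdot,r)$ is $\mathfrak m$-measurable; (ii) there is $C>0$ such that for every $r\in(0,R]$, for $\mathfrak m$-a.e. $x\in E_0$, $\sup_{r'\in[r/2,r]}G(x,r')\le C\,G(x,r)$; (iii) there is $D\subseteq E_0\times E_0$ with $(\mathfrak m\otimes\mathfrak m)((E_0\times E_0)\setminus D)=0$ such that for all $(x,x')\in D$ with $x\in E$ and $x'\in\mathrm B(x,R)\setminus\{x\}$, $(\mathsf Q_f(x,x'))^p\le G(x,\mathsf d(x,x'))+G(x',\mathsf d(x,x'))$. Then for every $r\in(0,R]$, \[ \int_E\int_{\mathrm B(x,r)}(\mathsf Q_f(x,x'))^p\rho(x,x')\,\mathrm d\mathfrak m(x')\,\mathrm d\mathfrak m(x)\le C\,\mathcal I^U_{E,r}[\rho]\sup_{r'\in(0,r]}\int_{E_0}G(x,r')\,\mathrm d\mathfrak m(x). \]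
   Context: $(\mathsf X,\mathsf d)$ is a locally complete separable metric space of positive diameter with a locally finite Borel outer measure $\mathfrak m$, $\mathfrak m(\mathsf X)>0$. Conventions $0\cdot(+\infty)=0/0=0$. Closed balls $\mathrm B(x,r)=\{x':\mathsf d(x,x')\le r\}$, $\mathrm B(S,r)=\{x':\operatorname{dist}(S,\{x'\})\le r\}$; $\mathrm A(x,\tau)=\{x':\mathsf d(x,x')\in\tau\}$. $S\Subset S_0$ means $S\subseteq S_0$ and $\operatorname{dist}(S,\mathsf X\setminus S_0)>0$. $\mathfrak M(E,\mathsf Y)$: $\mathfrak m$-measurable maps $E\to\mathsf Y$ separably valued off an $\mathfrak m$-null set. $\mathfrak M_+(\mathsf X\times\mathsf X)$: $(\mathfrak m\otimes\mathfrak m)$-measurable functions into $[0,+\infty]$. $\mathsf Q_f(x,x')=\mathsf d_{\mathsf Y}(f(x),f(x'))/\mathsf d(x,x')$ for $x\ne x'$, $0$ for $x=x'$. For $r>0$, $\mathcal P^U_r$ is the set of sequences $(\tau_k)_{k\in\mathbb N_0}$ of nonempty intervals in $(0,r]$ with $\sup\tau_k\le2\inf\tau_k$ and $(0,r]\subseteq\bigcup_k\tau_k$; for $S\subseteq\mathsf X$, $\mathcal I^U_{S,r}[\rho,\tau_\bullet]=\sum_k\operatorname{ess\,sup}_{x\in\mathrm B(S,\sup\tau_k)}\int_{\mathrm A(x,\tau_k)}(\rho(x,x')+\rho(x',x))\,\mathrm d\mathfrak m(x')$ (ess sup w.r.t. $\mathfrak m$) and $\mathcal I^U_{S,r}[\rho]=\inf_{\tau_\bullet\in\mathcal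 P^U_r}\mathcal I^U_{S,r}[\rho,\tau_\bullet]$. *)

theory Defs
  imports "HOL-Analysis.Analysis"
begin

text \<open>Closed metric neighbourhood B(S,r) = {x'. dist(S,{x'}) \<le> r}; empty when S is empty
  (dist from the empty set is +infinity).\<close>
definition closed_nbhd :: "'a::metric_space set \<Rightarrow> real \<Rightarrow> 'a set" where
  "closed_nbhd S r = {x. S \<noteq> {} \<and> infdist x S \<le> r}"

definition annulus :: "'a::metric_space \<Rightarrow> real set \<Rightarrow> 'a set" where
  "annulus x \<tau> = {x'. dist x x' \<in> \<tau>}"

definition well_inside :: "'a::metric_space set \<Rightarrow> 'a set \<Rightarrow> bool" where
  "well_inside S S0 \<longleftrightarrow> S \<subseteq> S0 \<and> (\<exists>\<delta>>0. \<forall>x\<in>S. \<forall>y. y \<notin> S0 \<longrightarrow> \<delta> \<le> dist x y)"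

definition meas_maps :: "'a measure \<Rightarrow> 'a set \<Rightarrow> ('a \<Rightarrow> 'b::metric_space) set" where
  "meas_maps M E = {f. (\<forall>U. open U \<longrightarrow> {x\<in>E. f x \<in> U} \<in> sets M) \<and>
      (\<exists>N\<in>null_sets M. \<exists>C. countable C \<and> f ` (E - N) \<subseteq> closure C)}"

definition diffquot :: "('a::metric_space \<Rightarrow> 'b::metric_space) \<Rightarrow> 'a \<Rightarrow> 'a \<Rightarrow> real" where
  "diffquot f x x' = (if x = x' then 0 else dist (f x) (f x') / dist x x')"

definition ess_sup_on :: "'a measure \<Rightarrow> 'a set \<Rightarrow> ('a \<Rightarrow> ennreal) \<Rightarrow> ennreal" where
  "ess_sup_on M S g = Inf {c. \<exists>N\<in>null_sets M. \<forall>x\<in>S - N. g x \<le> c}"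

definition adm_intervals :: "real \<Rightarrow> (nat \<Rightarrow> real set) set" where
  "adm_intervals r = {\<tau>. (\<forall>k. \<tau> k \<noteq> {} \<and> is_interval (\<tau> k) \<and> \<tau> k \<subseteq> {0<..r}
        \<and> Sup (\<tau> k) \<le> 2 * Inf (\<tau> k)) \<and> {0<..r} \<subseteq> (\<Union>k. \<tau> k)}"

definition IU_seq :: "'a::metric_space measure \<Rightarrow> 'a set \<Rightarrow> ('a \<times> 'a \<Rightarrow> ennreal) \<Rightarrow> (nat \<Rightarrow> real set) \<Rightarrow> ennreal" where
  "IU_seq M S \<rho> \<tau> = (\<Sum>k. ess_sup_on M (closed_nbhd S (Sup (\<tau> k)))
      (\<lambda>x. \<integral>\<^sup>+ x' \<in> annulus x (\<tau> k). (\<rho> (x, x') + \<rho> (x', x)) \<partial>M))"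

definition IU :: "'a::metric_space measure \<Rightarrow> 'a set \<Rightarrow> real \<Rightarrow> ('a \<times> 'a \<Rightarrow> ennreal) \<Rightarrow> ennreal" where
  "IU M S r \<rho> = (INF \<tau>\<in>adm_intervals r. IU_seq M S \<rho> \<tau>)"

end

(*
  Fix an admissible sequence of intervals tau_k covering (0,r], with s_k = sup tau_k <= 2 inf tau_k.
  If d(x,x') lies in tau_k then it lies in [s_k/2, s_k], so the doubling condition turns the
  hypothesis on Q_f into Q_f(x,x')^p <= C (G(x,s_k) + G(x',s_k)).  Fubini moves the G(x',s_k)
  term onto x', so both terms become the integral of G(y,s_k) against the mass of
  rho(y,.) + rho(.,y) on the annulus A(y,tau_k); this mass vanishes unless y lies in B(E,s_k),
  where it is a.e. bounded by the essential supremum occurring in I^U_{E,r}[rho,tau].  Summing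
  over k and taking the infimum over tau gives the estimate.
*)

theory Submission
  imports Defs
begin

lemma dense_ball_subset_ball:
  fixes x :: "'a::metric_space"
  assumes "closure S = UNIV" and "0 < e"
  obtains s n where "s \<in> S" "x \<in> ball s (1 / Suc n)" "ball s (1 / Suc n) \<subseteq> ball x e"
proof -
  obtain n :: nat where n: "1 / Suc n < e / 2"
    using assms(2) by (metis half_gt_zero_iff nat_approx_posE)
  have "x \<in> closure S"
    using assms(1) by simp
  then obtain s where s: "s \<in> S" "dist s x < 1 / Suc n"
    by (metis closure_approachable of_nat_0_less_iff zero_less_Suc zero_less_divide_1_iff)
  have "ball s (1 / Suc n) \<subseteq> ball x e"
  proof
    fix y assume "y \<in> ball s (1 / Suc n)"
    then show "y \<in> ball x e"
      using s n dist_triangle[of x y s] by (simp add: dist_commute)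
  qed
  moreover have "x \<in> ball s (1 / Suc n)"
    using s(2) by (simp add: dist_commute)
  ultimately show ?thesis
    using s(1) that by blast
qed

lemma sigma_finite_measure_if_locally_finite_separable:
  fixes M :: "'a::metric_space measure"
  assumes space: "space M = UNIV" and borel: "sets borel \<subseteq> sets M"
    and loc_finite: "\<forall>x. \<exists>s>0. emeasure M (ball x s) < \<infinity>"
    and separable: "\<exists>S::'a set. countable S \<and> closure S = UNIV"
  shows "sigma_finite_measure M"
proof -
  obtain S :: "'a set" where S: "countable S" "closure S = UNIV"
    using separable by blast
  define A where "A = {ball s (1 / Suc n) | s n. s \<in> S \<and> emeasure M (ball s (1 / Suc n)) < \<infinity>}"
  have "A \<subseteq> (\<lambda>(s, n). ball s (1 / Suc n)) ` (S \<times> (UNIV :: nat set))"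
    unfolding A_def by auto
  moreover have "countable ((\<lambda>(s, n). ball s (1 / Suc n)) ` (S \<times> (UNIV :: nat set)))"
    using S(1) by auto
  ultimately have "countable A"
    by (rule countable_subset)
  moreover have "A \<subseteq> sets M" "\<forall>a\<in>A. emeasure M a \<noteq> \<infinity>"
    unfolding A_def using borel by auto
  moreover have "\<Union>A = space M"
    unfolding space
  proof (intro set_eqI iffI UNIV_I)
    fix x :: 'a
    obtain e where e: "e > 0" "emeasure M (ball x e) < \<infinity>"
      using loc_finite by blast
    then obtain s n where s: "s \<in> S" "x \<in> ball s (1 / Suc n)" "ball s (1 / Suc n) \<subseteq> ball x e"
      using dense_ball_subset_ball[OF S(2)] by blast
    then have "emeasure M (ball s (1 / Suc n)) \<le> emeasure M (ball x e)"
      by (intro emeasure_mono) (use borel in auto)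
    then have "ball s (1 / Suc n) \<in> A"
      unfolding A_def using s(1) e(2) by (blast dest: le_less_trans)
    then show "x \<in> \<Union>A"
      using s(2) by blast
  qed
  ultimately show ?thesis
    by (intro sigma_finite_measure.intro) blast
qed

lemma AE_le_ess_sup_on: "AE x in M. x \<in> S \<longrightarrow> g x \<le> ess_sup_on M S g"
proof -
  define A where "A = {c. \<exists>N\<in>null_sets M. \<forall>x\<in>S - N. g x \<le> c}"
  have "top \<in> A"
    unfolding A_def by (auto intro!: bexI[of _ "{}"])
  then obtain u where u: "\<And>n. u n \<in> A" "u \<longlonglongrightarrow> Inf A"
    using Inf_as_limit[of A] by blast
  have "\<forall>n. \<exists>N\<in>null_sets M. \<forall>x\<in>S - N. g x \<le> u n"
    using u(1) unfolding A_def by blast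
  then obtain N where N: "\<And>n. N n \<in> null_sets M" "\<And>n x. x \<in> S - N n \<Longrightarrow> g x \<le> u n"
    by metis
  show ?thesis
  proof (rule AE_I')
    show "(\<Union>n. N n) \<in> null_sets M"
      using N(1) by auto
    have "g x \<le> Inf A" if "x \<in> S" "x \<notin> (\<Union>n. N n)" for x
      using that N(2) by (intro LIMSEQ_le_const[OF u(2)]) auto
    then show "{x \<in> space M. \<not> (x \<in> S \<longrightarrow> g x \<le> ess_sup_on M S g)} \<subseteq> (\<Union>n. N n)"
      unfolding ess_sup_on_def A_def by auto
  qed
qed

lemma ess_sup_on_cong_AE:
  assumes "AE x in M. g x = h x" and "S \<subseteq> space M"
  shows "ess_sup_on M S g = ess_sup_on M S h"
proof -
  have le: "{c. \<exists>N\<in>null_sets M. \<forall>x\<in>S - N. g x \<le> c} \<subseteq> {c. \<exists>N\<in>null_sets M. \<forall>x\<in>S - N. h x \<le> c}"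
    if ae: "AE x in M. g x = h x" for g h :: "'a \<Rightarrow> ennreal"
  proof
    fix c assume "c \<in> {c. \<exists>N\<in>null_sets M. \<forall>x\<in>S - N. g x \<le> c}"
    then obtain N where N: "N \<in> null_sets M" "\<And>x. x \<in> S - N \<Longrightarrow> g x \<le> c"
      by auto
    obtain N' where N': "N' \<in> null_sets M" "{x \<in> space M. \<not> g x = h x} \<subseteq> N'"
      using ae unfolding eventually_ae_filter by blast
    have "h x \<le> c" if "x \<in> S - (N \<union> N')" for x
      using that N(2)[of x] N'(2) \<open>S \<subseteq> space M\<close> by fastforce
    moreover have "N \<union> N' \<in> null_sets M"
      using N(1) N'(1) by (rule null_sets.Un)
    ultimately show "c \<in> {c. \<exists>N\<in>null_sets M. \<forall>x\<in>S - N. h x \<le> c}"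
      by blast
  qed
  have "AE x in M. h x = g x"
    using assms(1) by (rule eventually_mono) simp
  then have "{c. \<exists>N\<in>null_sets M. \<forall>x\<in>S - N. g x \<le> c} = {c. \<exists>N\<in>null_sets M. \<forall>x\<in>S - N. h x \<le> c}"
    by (rule subset_antisym[OF le[OF assms(1)] le])
  then show ?thesis
    unfolding ess_sup_on_def by simp
qed

lemma mem_closed_nbhdI: "x \<in> E \<Longrightarrow> dist x y \<le> s \<Longrightarrow> y \<in> closed_nbhd E s"
  using infdist_le[of x E y] by (auto simp: closed_nbhd_def dist_commute)

lemma mem_of_closed_nbhd_subset:
  assumes "closed_nbhd E R \<subseteq> E0" and "x \<in> E" and "dist x y \<le> R"
  shows "x \<in> E0" and "y \<in> E0"
proof -
  have "dist x x \<le> R"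
    using assms(3) by (metis dist_self order_trans zero_le_dist)
  then show "x \<in> E0" "y \<in> E0"
    using mem_closed_nbhdI[OF assms(2)] assms(1,3) by blast+
qed

lemma adm_intervals_cover: "\<tau> \<in> adm_intervals r \<Longrightarrow> t \<in> {0<..r} \<Longrightarrow> \<exists>k. t \<in> \<tau> k"
  unfolding adm_intervals_def by blast

lemma adm_intervalsD:
  assumes "\<tau> \<in> adm_intervals r"
  shows "Sup (\<tau> k) \<in> {0<..r}" and "t \<in> \<tau> k \<Longrightarrow> t \<in> {Sup (\<tau> k) / 2..Sup (\<tau> k)}"
    and "\<tau> k \<in> sets borel"
proof -
  have \<tau>: "\<tau> k \<noteq> {}" "is_interval (\<tau> k)" "\<tau> k \<subseteq> {0<..r}" "Sup (\<tau> k) \<le> 2 * Inf (\<tau> k)"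
    using assms unfolding adm_intervals_def by auto
  have above: "bdd_above (\<tau> k)"
    using \<tau>(3) by (auto intro!: bdd_aboveI[of _ r])
  have below: "bdd_below (\<tau> k)"
    using \<tau>(3) by (auto intro!: bdd_belowI[of _ 0])
  obtain t0 where t0: "t0 \<in> \<tau> k"
    using \<tau>(1) by blast
  have "0 < t0"
    using t0 \<tau>(3) by auto
  then have "0 < Sup (\<tau> k)"
    using cSup_upper[OF t0 above] by linarith
  moreover have "Sup (\<tau> k) \<le> r"
    using \<tau>(1,3) by (intro cSup_least) auto
  ultimately show "Sup (\<tau> k) \<in> {0<..r}"
    by simp
  show "t \<in> {Sup (\<tau> k) / 2..Sup (\<tau> k)}" if "t \<in> \<tau> k"
    using cSup_upper[OF that above] cInf_lower[OF that below] \<tau>(4) by simp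
  show "\<tau> k \<in> sets borel"
    using real_interval_borel_measurable[OF \<tau>(2)] .
qed

lemma adm_intervals_nonempty:
  assumes r: "0 < r"
  shows "adm_intervals r \<noteq> {}"
proof -
  have "\<exists>k. t \<in> {r / 2 ^ Suc k<..r / 2 ^ k}" if t: "0 < t" "t \<le> r" for t
  proof -
    define k where "k = nat \<lfloor>log 2 (r / t)\<rfloor>"
    have "0 \<le> log 2 (r / t)"
      using t by simp
    then have k: "real k \<le> log 2 (r / t)" "log 2 (r / t) < real k + 1"
      unfolding k_def by linarith+
    have "2 powr real k \<le> r / t" "r / t < 2 powr (real k + 1)"
      using k t r by (simp_all add: le_log_iff log_less_iff)
    moreover have "2 powr real k = 2 ^ k" "2 powr (real k + 1) = 2 ^ Suc k"
      using powr_realpow[of 2 k] powr_realpow[of 2 "Suc k"] by (simp_all add: add.commute)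
    ultimately have "2 ^ k \<le> r / t" "r / t < 2 ^ Suc k"
      by simp_all
    then show ?thesis
      using t r by (intro exI[of _ k]) (simp add: field_simps)
  qed
  then have "{0<..r} \<subseteq> (\<Union>k. {r / 2 ^ Suc k<..r / 2 ^ k})"
    by force
  moreover have "{r / 2 ^ Suc k<..r / 2 ^ k} \<noteq> {} \<and> is_interval {r / 2 ^ Suc k<..r / 2 ^ k}
      \<and> {r / 2 ^ Suc k<..r / 2 ^ k} \<subseteq> {0<..r}
      \<and> Sup {r / 2 ^ Suc k<..r / 2 ^ k} \<le> 2 * Inf {r / 2 ^ Suc k<..r / 2 ^ k}" for k :: nat
  proof -
    have "r / 2 ^ Suc k < r / 2 ^ k" "0 < r / 2 ^ Suc k" "r / 2 ^ k \<le> r"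
      using r by (simp_all add: field_simps)
    then show ?thesis
      by (auto simp: is_interval_1)
  qed
  ultimately have "(\<lambda>k. {r / 2 ^ Suc k<..r / 2 ^ k}) \<in> adm_intervals r"
    unfolding adm_intervals_def by blast
  then show ?thesis
    by blast
qed

lemma ennreal_le_suminf: "(f :: nat \<Rightarrow> ennreal) k \<le> (\<Sum>k. f k)"
  using sum_le_suminf[of f "{k}"] by simp

lemma le_suminf_annuli_if_doubling:
  fixes G :: "'a \<Rightarrow> real \<Rightarrow> ennreal" and C w :: ennreal
  assumes \<tau>: "\<tau> \<in> adm_intervals r" and d: "d \<in> {0<..r}"
    and doubling: "\<And>y k. y \<in> {x, x'} \<Longrightarrow> (SUP t\<in>{Sup (\<tau> k)/2..Sup (\<tau> k)}. G y t) \<le> C * G y (Sup (\<tau> k))"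
  shows "(G x d + G x' d) * w \<le> C * (\<Sum>k. indicator (\<tau> k) d * (G x (Sup (\<tau> k)) + G x' (Sup (\<tau> k))) * w)"
proof -
  obtain k where k: "d \<in> \<tau> k"
    using adm_intervals_cover[OF \<tau> d] by blast
  have "G y d \<le> C * G y (Sup (\<tau> k))" if "y \<in> {x, x'}" for y
    using SUP_upper[OF adm_intervalsD(2)[OF \<tau> k], of "G y"] doubling[OF that] by (rule order_trans)
  then have "(G x d + G x' d) * w \<le> C * (indicator (\<tau> k) d * (G x (Sup (\<tau> k)) + G x' (Sup (\<tau> k))) * w)"
    using k by (simp add: add_mono distrib_left mult_right_mono mult.assoc[symmetric])
  also have "\<dots> \<le> C * (\<Sum>k. indicator (\<tau> k) d * (G x (Sup (\<tau> k)) + G x' (Sup (\<tau> k))) * w)"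
    by (intro mult_left_mono ennreal_le_suminf) simp
  finally show ?thesis .
qed

text \<open>The hypothesis on the zero case cannot be dropped: \<open>K\<close> may be \<open>\<infinity>\<close>, and \<open>\<infinity> * 0 = 0\<close>.\<close>

lemma ennreal_le_mult_INF:
  fixes L K :: ennreal
  assumes "A \<noteq> {}" and le: "\<And>a. a \<in> A \<Longrightarrow> L \<le> K * f a"
    and zero: "(INF a\<in>A. f a) = 0 \<Longrightarrow> L = 0"
  shows "L \<le> K * (INF a\<in>A. f a)"
proof (cases "(INF a\<in>A. f a) = 0")
  case True
  then show ?thesis
    using zero by simp
next
  case INF_pos: False
  consider "K = 0" | "K = top" | "K \<noteq> 0" "K < top"
    using top.not_eq_extremum by blast
  then show ?thesis
  proof cases
    case 1
    then show ?thesis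
      using le \<open>A \<noteq> {}\<close> by fastforce
  next
    case 2
    then show ?thesis
      using INF_pos by (simp add: ennreal_top_mult)
  next
    case 3
    then have "L / K \<le> (INF a\<in>A. f a)"
      using le by (intro INF_greatest divide_le_posI_ennreal) (auto simp: zero_less_iff_neq_zero)
    then have "K * (L / K) \<le> K * (INF a\<in>A. f a)"
      by (rule mult_left_mono) simp
    moreover have "K * (L / K) = L"
      using 3 by (metis ennreal_mult_divide_eq ennreal_times_divide mult.commute top.not_eq_extremum)
    ultimately show ?thesis
      by simp
  qed
qed

locale separable_metric_measure = sigma_finite_measure M
  for M :: "'a::metric_space measure" +
  assumes space_eq [simp]: "space M = UNIV"
    and borel_subset: "sets borel \<subseteq> sets M"
    and separable: "\<exists>S::'a set. countable S \<and> closure S = UNIV"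
begin

sublocale P: pair_sigma_finite M M
  by unfold_locales

lemma measurable_from_borel: "f \<in> measurable borel N \<Longrightarrow> f \<in> measurable M N"
  using borel_subset unfolding measurable_def by auto

lemma measurable_dist [measurable]:
  "(\<lambda>y. dist x y) \<in> borel_measurable M" "(\<lambda>y. dist y x) \<in> borel_measurable M"
  by (intro measurable_from_borel borel_measurable_continuous_onI continuous_intros)+

lemma sets_annulus [measurable]: "T \<in> sets borel \<Longrightarrow> annulus x T \<in> sets M"
  using measurable_sets[OF measurable_dist(1)] by (simp add: annulus_def vimage_def)

text \<open>The Borel sets of \<open>X \<times> X\<close> may exceed the product \<open>\<sigma>\<close>-algebra; separability makes
  the distance an infimum of countably many product-measurable functions.\<close>

lemma measurable_dist_pair [measurable]: "(\<lambda>z. dist (fst z) (snd z)) \<in> borel_measurable (M \<Otimes>\<^sub>M M)"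
proof -
  obtain S :: "'a set" where S: "countable S" "closure S = UNIV"
    using separable by blast
  have eq: "ennreal (dist a b) = (INF s\<in>S. ennreal (dist a s + dist s b))" for a b
  proof (rule antisym)
    show "ennreal (dist a b) \<le> (INF s\<in>S. ennreal (dist a s + dist s b))"
      by (intro INF_greatest ennreal_leI dist_triangle)
    show "(INF s\<in>S. ennreal (dist a s + dist s b)) \<le> ennreal (dist a b)"
    proof (rule ennreal_le_epsilon)
      fix e :: real assume e: "0 < e"
      have "a \<in> closure S"
        using S(2) by simp
      then obtain s where s: "s \<in> S" "dist s a < e / 2"
        using e by (metis closure_approachable half_gt_zero_iff)
      have "(INF s\<in>S. ennreal (dist a s + dist s b)) \<le> ennreal (dist a s + dist s b)"
        using s(1) by (rule INF_lower)
      also have "\<dots> \<le> ennreal (dist a b + e)"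
        using s(2) dist_triangle[of s b a] by (intro ennreal_leI) (simp add: dist_commute)
      finally show "(INF s\<in>S. ennreal (dist a s + dist s b)) \<le> ennreal (dist a b) + ennreal e"
        using e by simp
    qed
  qed
  have "(\<lambda>z. INF s\<in>S. ennreal (dist (fst z) s + dist s (snd z))) \<in> borel_measurable (M \<Otimes>\<^sub>M M)"
    by (intro borel_measurable_INF[OF S(1)]) measurable
  then have "(\<lambda>z. ennreal (dist (fst z) (snd z))) \<in> borel_measurable (M \<Otimes>\<^sub>M M)"
    by (simp only: eq)
  then have "(\<lambda>z. enn2real (ennreal (dist (fst z) (snd z)))) \<in> borel_measurable (M \<Otimes>\<^sub>M M)"
    by measurable
  then show ?thesis
    by simp
qed

lemma measurable_dist_pair_swap [measurable]: "(\<lambda>z. dist (snd z) (fst z)) \<in> borel_measurable (M \<Otimes>\<^sub>M M)"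
  by (simp add: dist_commute)

lemma measurable_sections:
  assumes "f \<in> borel_measurable (M \<Otimes>\<^sub>M M)"
  shows "(\<lambda>y. f (x, y)) \<in> borel_measurable M" "(\<lambda>y. f (y, x)) \<in> borel_measurable M"
    and "(\<lambda>z. f (snd z, fst z)) \<in> borel_measurable (M \<Otimes>\<^sub>M M)"
proof -
  show "(\<lambda>y. f (x, y)) \<in> borel_measurable M"
    using measurable_Pair2[OF assms, of x] by simp
  show "(\<lambda>y. f (y, x)) \<in> borel_measurable M"
    using measurable_Pair1[OF assms, of x] by simp
  show "(\<lambda>z. f (snd z, fst z)) \<in> borel_measurable (M \<Otimes>\<^sub>M M)"
    using measurable_pair_swap[OF assms] by (simp add: split_beta')
qed

lemma AE_sections_eq:
  assumes "AE z in M \<Otimes>\<^sub>M M. \<rho> z = \<rho>' z"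
  shows "AE x in M. AE y in M. \<rho> (x, y) = \<rho>' (x, y) \<and> \<rho> (y, x) = \<rho>' (y, x)"
proof -
  obtain N where N: "N \<in> null_sets (M \<Otimes>\<^sub>M M)" "{z \<in> space (M \<Otimes>\<^sub>M M). \<rho> z \<noteq> \<rho>' z} \<subseteq> N"
    using assms unfolding eventually_ae_filter by blast
  have "AE x in M. AE y in M. (x, y) \<notin> N"
    using P.AE_pair[OF AE_not_in[OF N(1)]] by simp
  moreover have "{z \<in> space (M \<Otimes>\<^sub>M M). (fst z, snd z) \<notin> N} = space (M \<Otimes>\<^sub>M M) - N"
    by auto
  then have "{z \<in> space (M \<Otimes>\<^sub>M M). (fst z, snd z) \<notin> N} \<in> sets (M \<Otimes>\<^sub>M M)"
    using N(1) by auto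
  ultimately have "AE x in M. AE y in M. (y, x) \<notin> N"
    by (subst (asm) P.AE_commute)
  with \<open>AE x in M. AE y in M. (x, y) \<notin> N\<close> show ?thesis
  proof eventually_elim
    case (elim x)
    then show ?case
      by eventually_elim (use N(2) in \<open>auto simp: space_pair_measure\<close>)
  qed
qed

lemma IU_cong_AE:
  assumes "AE z in M \<Otimes>\<^sub>M M. \<rho> z = \<rho>' z"
  shows "IU M S r \<rho> = IU M S r \<rho>'"
proof -
  have "AE x in M. (\<integral>\<^sup>+x'\<in>T x. (\<rho> (x, x') + \<rho> (x', x)) \<partial>M) = (\<integral>\<^sup>+x'\<in>T x. (\<rho>' (x, x') + \<rho>' (x', x)) \<partial>M)"
    for T :: "'a \<Rightarrow> 'a set"
    using AE_sections_eq[OF assms]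
  proof eventually_elim
    case (elim x)
    show ?case
      by (rule nn_integral_cong_AE) (use elim in \<open>eventually_elim, auto\<close>)
  qed
  then show ?thesis
    unfolding IU_def IU_seq_def by (intro INF_cong suminf_cong ess_sup_on_cong_AE refl) simp_all
qed

lemma nn_integral_symmetrize_weight:
  fixes g :: "'a \<Rightarrow> ennreal" and a :: "'a \<Rightarrow> 'a \<Rightarrow> ennreal"
  assumes [measurable]: "g \<in> borel_measurable M" and a: "case_prod a \<in> borel_measurable (M \<Otimes>\<^sub>M M)"
  shows "(\<integral>\<^sup>+x. \<integral>\<^sup>+x'. (g x + g x') * a x x' \<partial>M \<partial>M) = (\<integral>\<^sup>+y. g y * (\<integral>\<^sup>+z. a y z + a z y \<partial>M) \<partial>M)"
proof -
  have [measurable]: "case_prod a \<in> borel_measurable (M \<Otimes>\<^sub>M M)" "(\<lambda>(x, y). a y x) \<in> borel_measurable (M \<Otimes>\<^sub>M M)"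
    using a measurable_pair_swap[OF a] by simp_all
  have [measurable]: "a x \<in> borel_measurable M" "(\<lambda>y. a y x) \<in> borel_measurable M" for x
    using measurable_sections[OF a] by simp_all
  have "(\<integral>\<^sup>+x. \<integral>\<^sup>+x'. (g x + g x') * a x x' \<partial>M \<partial>M)
      = (\<integral>\<^sup>+x. (\<integral>\<^sup>+x'. g x * a x x' \<partial>M) + (\<integral>\<^sup>+x'. g x' * a x x' \<partial>M) \<partial>M)"
    by (intro nn_integral_cong) (simp add: distrib_right nn_integral_add)
  also have "\<dots> = (\<integral>\<^sup>+x. g x * (\<integral>\<^sup>+x'. a x x' \<partial>M) \<partial>M) + (\<integral>\<^sup>+x. \<integral>\<^sup>+x'. g x' * a x x' \<partial>M \<partial>M)"
    by (simp add: nn_integral_add nn_integral_cmult)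
  also have "(\<integral>\<^sup>+x. \<integral>\<^sup>+x'. g x' * a x x' \<partial>M \<partial>M) = (\<integral>\<^sup>+x'. g x' * (\<integral>\<^sup>+x. a x x' \<partial>M) \<partial>M)"
    by (simp add: P.Fubini'[symmetric] nn_integral_cmult)
  also have "(\<integral>\<^sup>+x. g x * (\<integral>\<^sup>+x'. a x x' \<partial>M) \<partial>M) + (\<integral>\<^sup>+x'. g x' * (\<integral>\<^sup>+x. a x x' \<partial>M) \<partial>M)
      = (\<integral>\<^sup>+y. g y * (\<integral>\<^sup>+z. a y z + a z y \<partial>M) \<partial>M)"
    by (simp add: nn_integral_add distrib_left)
  finally show ?thesis .
qed

lemma nn_integral_annulus_weight_le:
  fixes g :: "'a \<Rightarrow> ennreal"
  assumes \<rho> [measurable]: "\<rho> \<in> borel_measurable (M \<Otimes>\<^sub>M M)" and [measurable]: "g \<in> borel_measurable M"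
    "E \<in> sets M" "T \<in> sets borel"
    and T: "T \<subseteq> {..s}"
  shows "(\<integral>\<^sup>+x. \<integral>\<^sup>+x'. indicator E x * indicator T (dist x x') * (g x + g x') * \<rho> (x, x') \<partial>M \<partial>M)
    \<le> (\<integral>\<^sup>+x. g x \<partial>M) * ess_sup_on M (closed_nbhd E s) (\<lambda>x. \<integral>\<^sup>+x'\<in>annulus x T. (\<rho> (x, x') + \<rho> (x', x)) \<partial>M)"
    (is "_ \<le> _ * ?ess")
proof -
  note [measurable] = measurable_sections[OF \<rho>]
  define a where "a x x' = indicator E x * indicator T (dist x x') * \<rho> (x, x')" for x x'
  have "(\<integral>\<^sup>+x. \<integral>\<^sup>+x'. indicator E x * indicator T (dist x x') * (g x + g x') * \<rho> (x, x') \<partial>M \<partial>M)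
      = (\<integral>\<^sup>+x. \<integral>\<^sup>+x'. (g x + g x') * a x x' \<partial>M \<partial>M)"
    by (simp add: a_def ac_simps)
  also have "\<dots> = (\<integral>\<^sup>+y. g y * (\<integral>\<^sup>+z. a y z + a z y \<partial>M) \<partial>M)"
    by (rule nn_integral_symmetrize_weight) (simp_all add: a_def)
  also have "\<dots> \<le> (\<integral>\<^sup>+y. g y * ?ess \<partial>M)"
  proof (rule nn_integral_mono_AE)
    show "AE y in M. g y * (\<integral>\<^sup>+z. a y z + a z y \<partial>M) \<le> g y * ?ess"
      using AE_le_ess_sup_on[where M=M and S="closed_nbhd E s" and g="\<lambda>y. \<integral>\<^sup>+z\<in>annulus y T. (\<rho> (y, z) + \<rho> (z, y)) \<partial>M"]
    proof eventually_elim
      case (elim y)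
      have s: "0 \<le> s" if "dist y z \<in> T" for z
        using T that zero_le_dist[of y z] by (meson atMost_iff order_trans subsetD)
      have "a y z + a z y
          \<le> indicator (closed_nbhd E s) y * ((\<rho> (y, z) + \<rho> (z, y)) * indicator (annulus y T) z)" for z
        using T s[of z] mem_closed_nbhdI[of y E y s] mem_closed_nbhdI[of z E y s]
        by (auto simp: a_def annulus_def indicator_def dist_commute)
      then have "(\<integral>\<^sup>+z. a y z + a z y \<partial>M)
          \<le> indicator (closed_nbhd E s) y * (\<integral>\<^sup>+z\<in>annulus y T. (\<rho> (y, z) + \<rho> (z, y)) \<partial>M)"
        by (subst nn_integral_cmult[symmetric]) (auto intro!: nn_integral_mono)
      also have "\<dots> \<le> ?ess"
        using elim by (auto simp: indicator_def)
      finally show ?case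
        by (rule mult_left_mono) simp
    qed
  qed
  also have "\<dots> = (\<integral>\<^sup>+x. g x \<partial>M) * ?ess"
    by (simp add: nn_integral_multc)
  finally show ?thesis .
qed

lemma AE_nn_integral_kernel_le_suminf:
  fixes q :: "'a \<Rightarrow> 'a \<Rightarrow> ennreal" and G :: "'a \<Rightarrow> real \<Rightarrow> ennreal" and C :: ennreal
  assumes \<rho> [measurable]: "\<rho> \<in> borel_measurable (M \<Otimes>\<^sub>M M)"
    and \<tau>: "\<tau> \<in> adm_intervals r"
    and G_meas: "\<And>t. t \<in> {0<..r} \<Longrightarrow> (\<lambda>x. G x t) \<in> borel_measurable M"
    and G_doubling: "\<And>t. t \<in> {0<..r} \<Longrightarrow> AE x in M. (SUP t'\<in>{t/2..t}. G x t') \<le> C * G x t"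
    and q_le: "AE x in M. AE x' in M. x \<in> E \<longrightarrow> x' \<in> cball x r - {x} \<longrightarrow>
                 q x x' \<le> G x (dist x x') + G x' (dist x x')"
  shows "AE x in M. x \<in> E \<longrightarrow> (\<integral>\<^sup>+x'\<in>cball x r - {x}. q x x' * \<rho> (x, x') \<partial>M)
    \<le> C * (\<Sum>k. \<integral>\<^sup>+x'. indicator (\<tau> k) (dist x x') * (G x (Sup (\<tau> k)) + G x' (Sup (\<tau> k))) * \<rho> (x, x') \<partial>M)"
proof -
  note [measurable] = measurable_sections[OF \<rho>]
  have [measurable]: "(\<lambda>x. G x (Sup (\<tau> k))) \<in> borel_measurable M" "\<tau> k \<in> sets borel" for k
    using G_meas adm_intervalsD[OF \<tau>] by auto
  have "AE x in M. \<forall>k. (SUP t\<in>{Sup (\<tau> k)/2..Sup (\<tau> k)}. G x t) \<le> C * G x (Sup (\<tau> k))"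
    using G_doubling adm_intervalsD(1)[OF \<tau>] by (subst AE_all_countable) blast
  note doubling = this
  with q_le show ?thesis
  proof eventually_elim
    case (elim x)
    show ?case
    proof
      assume x: "x \<in> E"
      from elim(1) doubling
      have "AE x' in M. q x x' * \<rho> (x, x') * indicator (cball x r - {x}) x'
          \<le> C * (\<Sum>k. indicator (\<tau> k) (dist x x') * (G x (Sup (\<tau> k)) + G x' (Sup (\<tau> k))) * \<rho> (x, x'))"
      proof eventually_elim
        case (elim x')
        show ?case
        proof (cases "x' \<in> cball x r - {x}")
          case x': True
          then have "q x x' * \<rho> (x, x') \<le> (G x (dist x x') + G x' (dist x x')) * \<rho> (x, x')"
            using elim(1) x by (intro mult_right_mono) auto
          also have "\<dots> \<le> C * (\<Sum>k. indicator (\<tau> k) (dist x x') * (G x (Sup (\<tau> k)) + G x' (Sup (\<tau> k))) * \<rho> (x, x'))"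
            by (rule le_suminf_annuli_if_doubling[OF \<tau>])
              (use x' elim(2) \<open>\<forall>k. (SUP t\<in>{Sup (\<tau> k)/2..Sup (\<tau> k)}. G x t) \<le> C * G x (Sup (\<tau> k))\<close> in auto)
          finally show ?thesis
            using x' by simp
        qed simp
      qed
      then have "(\<integral>\<^sup>+x'\<in>cball x r - {x}. q x x' * \<rho> (x, x') \<partial>M)
          \<le> (\<integral>\<^sup>+x'. C * (\<Sum>k. indicator (\<tau> k) (dist x x') * (G x (Sup (\<tau> k)) + G x' (Sup (\<tau> k))) * \<rho> (x, x')) \<partial>M)"
        by (rule nn_integral_mono_AE)
      also have "\<dots> = C * (\<Sum>k. \<integral>\<^sup>+x'. indicator (\<tau> k) (dist x x') * (G x (Sup (\<tau> k)) + G x' (Sup (\<tau> k))) * \<rho> (x, x') \<partial>M)"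
        by (simp add: nn_integral_cmult nn_integral_suminf del: ennreal_suminf_multc)
      finally show "(\<integral>\<^sup>+x'\<in>cball x r - {x}. q x x' * \<rho> (x, x') \<partial>M)
          \<le> C * (\<Sum>k. \<integral>\<^sup>+x'. indicator (\<tau> k) (dist x x') * (G x (Sup (\<tau> k)) + G x' (Sup (\<tau> k))) * \<rho> (x, x') \<partial>M)" .
    qed
  qed
qed

lemma nn_integral_kernel_le_IU_seq:
  fixes q :: "'a \<Rightarrow> 'a \<Rightarrow> ennreal" and G :: "'a \<Rightarrow> real \<Rightarrow> ennreal" and C :: ennreal
  assumes \<rho> [measurable]: "\<rho> \<in> borel_measurable (M \<Otimes>\<^sub>M M)" and [measurable]: "E \<in> sets M"
    and \<tau>: "\<tau> \<in> adm_intervals r"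
    and G_meas: "\<And>t. t \<in> {0<..r} \<Longrightarrow> (\<lambda>x. G x t) \<in> borel_measurable M"
    and G_doubling: "\<And>t. t \<in> {0<..r} \<Longrightarrow> AE x in M. (SUP t'\<in>{t/2..t}. G x t') \<le> C * G x t"
    and q_le: "AE x in M. AE x' in M. x \<in> E \<longrightarrow> x' \<in> cball x r - {x} \<longrightarrow>
                 q x x' \<le> G x (dist x x') + G x' (dist x x')"
  shows "(\<integral>\<^sup>+x\<in>E. (\<integral>\<^sup>+x'\<in>cball x r - {x}. q x x' * \<rho> (x, x') \<partial>M) \<partial>M)
    \<le> C * IU_seq M E \<rho> \<tau> * (SUP t\<in>{0<..r}. \<integral>\<^sup>+x. G x t \<partial>M)"
proof -
  define s where "s k = Sup (\<tau> k)" for k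
  define h where "h k x x' = indicator E x * indicator (\<tau> k) (dist x x') * (G x (s k) + G x' (s k)) * \<rho> (x, x')"
    for k x x'
  define ess where "ess k = ess_sup_on M (closed_nbhd E (s k))
      (\<lambda>x. \<integral>\<^sup>+x'\<in>annulus x (\<tau> k). (\<rho> (x, x') + \<rho> (x', x)) \<partial>M)" for k
  define S where "S = (SUP t\<in>{0<..r}. \<integral>\<^sup>+x. G x t \<partial>M)"
  note [measurable] = measurable_sections[OF \<rho>]
  have s: "s k \<in> {0<..r}" "\<tau> k \<subseteq> {..s k}" for k
    using adm_intervalsD(1,2)[OF \<tau>] by (auto simp: s_def)
  have [measurable]: "(\<lambda>x. G x (s k)) \<in> borel_measurable M" "\<tau> k \<in> sets borel" for k
    using G_meas[OF s(1)] adm_intervalsD(3)[OF \<tau>] by auto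
  have [measurable]: "(\<lambda>(x, x'). h k x x') \<in> borel_measurable (M \<Otimes>\<^sub>M M)" for k
    unfolding h_def by measurable
  have "AE x in M. (\<integral>\<^sup>+x'\<in>cball x r - {x}. q x x' * \<rho> (x, x') \<partial>M) * indicator E x
      \<le> C * (\<Sum>k. \<integral>\<^sup>+x'. h k x x' \<partial>M)"
  proof -
    have "AE x in M. x \<in> E \<longrightarrow> (\<integral>\<^sup>+x'\<in>cball x r - {x}. q x x' * \<rho> (x, x') \<partial>M)
        \<le> C * (\<Sum>k. \<integral>\<^sup>+x'. indicator (\<tau> k) (dist x x') * (G x (s k) + G x' (s k)) * \<rho> (x, x') \<partial>M)"
      unfolding s_def using \<rho> \<tau> G_meas G_doubling q_le by (rule AE_nn_integral_kernel_le_suminf)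
    then show ?thesis
      by eventually_elim (simp add: h_def split: split_indicator)
  qed
  then have "(\<integral>\<^sup>+x\<in>E. (\<integral>\<^sup>+x'\<in>cball x r - {x}. q x x' * \<rho> (x, x') \<partial>M) \<partial>M)
      \<le> (\<integral>\<^sup>+x. C * (\<Sum>k. \<integral>\<^sup>+x'. h k x x' \<partial>M) \<partial>M)"
    by (rule nn_integral_mono_AE)
  also have "\<dots> = C * (\<Sum>k. \<integral>\<^sup>+x. \<integral>\<^sup>+x'. h k x x' \<partial>M \<partial>M)"
    by (simp add: nn_integral_cmult nn_integral_suminf)
  also have "\<dots> \<le> C * (\<Sum>k. (\<integral>\<^sup>+x. G x (s k) \<partial>M) * ess k)"
    unfolding h_def ess_def using s(2) by (intro mult_left_mono suminf_le nn_integral_annulus_weight_le) auto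
  also have "\<dots> \<le> C * (\<Sum>k. S * ess k)"
    unfolding S_def using s(1) by (intro mult_left_mono suminf_le mult_right_mono SUP_upper) auto
  also have "\<dots> = C * IU_seq M E \<rho> \<tau> * S"
    unfolding IU_seq_def ess_def s_def by (simp add: ac_simps)
  finally show ?thesis
    unfolding S_def .
qed

lemma AE_punctured_ball_le_IU_seq:
  assumes [measurable]: "\<rho> \<in> borel_measurable (M \<Otimes>\<^sub>M M)" and \<tau>: "\<tau> \<in> adm_intervals r"
  shows "AE x in M. x \<in> E \<longrightarrow> (\<integral>\<^sup>+x'\<in>cball x r - {x}. \<rho> (x, x') \<partial>M) \<le> IU_seq M E \<rho> \<tau>"
proof -
  define ess where "ess k = ess_sup_on M (closed_nbhd E (Sup (\<tau> k)))
      (\<lambda>x. \<integral>\<^sup>+x'\<in>annulus x (\<tau> k). (\<rho> (x, x') + \<rho> (x', x)) \<partial>M)" for k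
  note [measurable] = measurable_sections[OF assms(1)] adm_intervalsD(3)[OF \<tau>]
  have "AE x in M. \<forall>k. x \<in> closed_nbhd E (Sup (\<tau> k)) \<longrightarrow>
      (\<integral>\<^sup>+x'\<in>annulus x (\<tau> k). (\<rho> (x, x') + \<rho> (x', x)) \<partial>M) \<le> ess k"
    unfolding ess_def by (subst AE_all_countable) (intro allI AE_le_ess_sup_on)
  then show ?thesis
  proof eventually_elim
    case (elim x)
    show ?case
    proof
      assume x: "x \<in> E"
      have "\<rho> (x, x') * indicator (cball x r - {x}) x' \<le> (\<Sum>k. \<rho> (x, x') * indicator (annulus x (\<tau> k)) x')"
        for x'
      proof (cases "x' \<in> cball x r - {x}")
        case True
        then obtain k where "dist x x' \<in> \<tau> k"
          using adm_intervals_cover[OF \<tau>, of "dist x x'"] by auto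
        then show ?thesis
          using True ennreal_le_suminf[of "\<lambda>k. \<rho> (x, x') * indicator (annulus x (\<tau> k)) x'" k]
          by (simp add: annulus_def)
      qed simp
      then have "(\<integral>\<^sup>+x'\<in>cball x r - {x}. \<rho> (x, x') \<partial>M) \<le> (\<Sum>k. \<integral>\<^sup>+x'\<in>annulus x (\<tau> k). \<rho> (x, x') \<partial>M)"
        by (simp add: nn_integral_suminf[symmetric] nn_integral_mono)
      also have "\<dots> \<le> (\<Sum>k. ess k)"
      proof (intro suminf_le allI order_trans[OF _ elim[rule_format]])
        show "(\<integral>\<^sup>+x'\<in>annulus x (\<tau> k). \<rho> (x, x') \<partial>M)
            \<le> (\<integral>\<^sup>+x'\<in>annulus x (\<tau> k). (\<rho> (x, x') + \<rho> (x', x)) \<partial>M)" for k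
          by (intro nn_integral_mono) (simp add: indicator_def)
        show "x \<in> closed_nbhd E (Sup (\<tau> k))" for k
          using adm_intervalsD(1)[OF \<tau>, of k] x by (intro mem_closed_nbhdI[of x]) auto
      qed auto
      finally show "(\<integral>\<^sup>+x'\<in>cball x r - {x}. \<rho> (x, x') \<partial>M) \<le> IU_seq M E \<rho> \<tau>"
        unfolding IU_seq_def ess_def .
    qed
  qed
qed

lemma AE_punctured_ball_eq_0_if_IU_eq_0:
  assumes [measurable]: "\<rho> \<in> borel_measurable (M \<Otimes>\<^sub>M M)" and IU: "IU M E r \<rho> = 0"
  shows "AE x in M. x \<in> E \<longrightarrow> (\<integral>\<^sup>+x'\<in>cball x r - {x}. \<rho> (x, x') \<partial>M) = 0"
proof -
  have "adm_intervals r \<noteq> {}"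
    using IU unfolding IU_def by auto
  then obtain u where u: "\<And>n. u n \<in> IU_seq M E \<rho> ` adm_intervals r" "u \<longlonglongrightarrow> IU M E r \<rho>"
    using Inf_as_limit[of "IU_seq M E \<rho> ` adm_intervals r"] unfolding IU_def by blast
  have "AE x in M. x \<in> E \<longrightarrow> (\<integral>\<^sup>+x'\<in>cball x r - {x}. \<rho> (x, x') \<partial>M) \<le> u n" for n
    using u(1)[of n] AE_punctured_ball_le_IU_seq[of \<rho>] by auto
  then have "AE x in M. \<forall>n. x \<in> E \<longrightarrow> (\<integral>\<^sup>+x'\<in>cball x r - {x}. \<rho> (x, x') \<partial>M) \<le> u n"
    by (subst AE_all_countable) blast
  then show ?thesis
  proof eventually_elim
    case (elim x)
    show ?case
      using LIMSEQ_le_const[OF u(2)] elim IU by auto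
  qed
qed

lemma nn_integral_kernel_eq_0_if_IU_eq_0:
  fixes q :: "'a \<Rightarrow> 'a \<Rightarrow> ennreal"
  assumes [measurable]: "\<rho> \<in> borel_measurable (M \<Otimes>\<^sub>M M)" "E \<in> sets M" and IU: "IU M E r \<rho> = 0"
  shows "(\<integral>\<^sup>+x\<in>E. (\<integral>\<^sup>+x'\<in>cball x r - {x}. q x x' * \<rho> (x, x') \<partial>M) \<partial>M) = 0"
proof -
  note [measurable] = measurable_sections[OF assms(1)]
  have [measurable]: "cball x r - {x} \<in> sets M" for x
    using borel_subset by auto
  have "AE x in M. (\<integral>\<^sup>+x'\<in>cball x r - {x}. q x x' * \<rho> (x, x') \<partial>M) * indicator E x = 0"
    using AE_punctured_ball_eq_0_if_IU_eq_0[OF assms(1) IU]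
  proof eventually_elim
    case (elim x)
    have "(\<integral>\<^sup>+x'\<in>cball x r - {x}. q x x' * \<rho> (x, x') \<partial>M) \<le> (\<integral>\<^sup>+x'\<in>cball x r - {x}. \<infinity> * \<rho> (x, x') \<partial>M)"
      by (intro nn_integral_mono mult_right_mono) simp_all
    also have "\<dots> = \<infinity> * (\<integral>\<^sup>+x'\<in>cball x r - {x}. \<rho> (x, x') \<partial>M)"
      by (simp add: nn_integral_cmult mult.assoc)
    finally show ?case
      using elim by (auto simp: indicator_def)
  qed
  then have "(\<integral>\<^sup>+x\<in>E. (\<integral>\<^sup>+x'\<in>cball x r - {x}. q x x' * \<rho> (x, x') \<partial>M) \<partial>M) = (\<integral>\<^sup>+x. 0 \<partial>M)"
    by (rule nn_integral_cong_AE)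
  then show ?thesis
    by simp
qed

lemma nn_integral_kernel_le_IU:
  fixes q :: "'a \<Rightarrow> 'a \<Rightarrow> ennreal" and G :: "'a \<Rightarrow> real \<Rightarrow> ennreal" and C :: ennreal
  assumes [measurable]: "\<rho> \<in> borel_measurable (M \<Otimes>\<^sub>M M)" "E \<in> sets M" and "0 < r"
    and "\<And>t. t \<in> {0<..r} \<Longrightarrow> (\<lambda>x. G x t) \<in> borel_measurable M"
    and "\<And>t. t \<in> {0<..r} \<Longrightarrow> AE x in M. (SUP t'\<in>{t/2..t}. G x t') \<le> C * G x t"
    and "AE x in M. AE x' in M. x \<in> E \<longrightarrow> x' \<in> cball x r - {x} \<longrightarrow>
           q x x' \<le> G x (dist x x') + G x' (dist x x')"
  shows "(\<integral>\<^sup>+x\<in>E. (\<integral>\<^sup>+x'\<in>cball x r - {x}. q x x' * \<rho> (x, x') \<partial>M) \<partial>M)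
    \<le> C * IU M E r \<rho> * (SUP t\<in>{0<..r}. \<integral>\<^sup>+x. G x t \<partial>M)"
proof -
  have "(\<integral>\<^sup>+x\<in>E. (\<integral>\<^sup>+x'\<in>cball x r - {x}. q x x' * \<rho> (x, x') \<partial>M) \<partial>M)
      \<le> C * (SUP t\<in>{0<..r}. \<integral>\<^sup>+x. G x t \<partial>M) * IU M E r \<rho>"
    unfolding IU_def
  proof (rule ennreal_le_mult_INF)
    show "adm_intervals r \<noteq> {}"
      using \<open>0 < r\<close> by (rule adm_intervals_nonempty)
    show "(\<integral>\<^sup>+x\<in>E. (\<integral>\<^sup>+x'\<in>cball x r - {x}. q x x' * \<rho> (x, x') \<partial>M) \<partial>M)
        \<le> C * (SUP t\<in>{0<..r}. \<integral>\<^sup>+x. G x t \<partial>M) * IU_seq M E \<rho> \<tau>" if "\<tau> \<in> adm_intervals r" for \<tau>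
      using nn_integral_kernel_le_IU_seq[OF assms(1,2) that assms(4-6)] by (simp add: ac_simps)
    show "(\<integral>\<^sup>+x\<in>E. (\<integral>\<^sup>+x'\<in>cball x r - {x}. q x x' * \<rho> (x, x') \<partial>M) \<partial>M) = 0"
      if "(INF \<tau>\<in>adm_intervals r. IU_seq M E \<rho> \<tau>) = 0"
      using nn_integral_kernel_eq_0_if_IU_eq_0[OF assms(1,2)] that unfolding IU_def by blast
  qed
  then show ?thesis
    by (simp add: ac_simps)
qed

lemma AE_AE_of_conull_subset:
  assumes "closed_nbhd E R \<subseteq> E0"
    and "\<exists>D \<subseteq> E0 \<times> E0. (\<exists>N\<in>null_sets (M \<Otimes>\<^sub>M M). (E0 \<times> E0) - D \<subseteq> N) \<and>
           (\<forall>(x, x')\<in>D. x \<in> E \<longrightarrow> x' \<in> cball x R - {x} \<longrightarrow> P x x')"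
  shows "AE x in M. AE x' in M. x \<in> E \<longrightarrow> x' \<in> cball x R - {x} \<longrightarrow> P x x'"
proof -
  obtain D where D: "D \<subseteq> E0 \<times> E0" "\<exists>N\<in>null_sets (M \<Otimes>\<^sub>M M). (E0 \<times> E0) - D \<subseteq> N"
    and P: "\<forall>(x, x')\<in>D. x \<in> E \<longrightarrow> x' \<in> cball x R - {x} \<longrightarrow> P x x'"
    using assms(2) by (elim exE conjE) (rule that)
  obtain N where N: "N \<in> null_sets (M \<Otimes>\<^sub>M M)" "(E0 \<times> E0) - D \<subseteq> N"
    using D(2) by (elim bexE) (rule that)
  have E0: "(x, x') \<in> E0 \<times> E0" if "x \<in> E" "x' \<in> cball x R" for x x'
    using mem_of_closed_nbhd_subset[OF assms(1) that(1)] that(2) by simp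
  from P.AE_pair[OF AE_not_in[OF N(1)]] show ?thesis
  proof (rule eventually_mono)
    fix x assume "AE x' in M. (x, x') \<notin> N"
    then show "AE x' in M. x \<in> E \<longrightarrow> x' \<in> cball x R - {x} \<longrightarrow> P x x'"
      by (rule eventually_mono) (use E0 N(2) P in blast)
  qed
qed

lemma nn_integral_kernel_le_IU_on:
  fixes q :: "'a \<Rightarrow> 'a \<Rightarrow> ennreal" and G :: "'a \<Rightarrow> real \<Rightarrow> ennreal" and C :: ennreal
  assumes [measurable]: "\<rho> \<in> borel_measurable (M \<Otimes>\<^sub>M M)" "E \<in> sets M" "E0 \<in> sets M"
    and r: "0 < r" "r \<le> R" and E0: "closed_nbhd E R \<subseteq> E0"
    and G_meas: "\<forall>t\<in>{0<..R}. (\<lambda>x. G x t) \<in> borel_measurable (restrict_space M E0)"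
    and G_doubling: "\<forall>t\<in>{0<..R}. AE x in M. x \<in> E0 \<longrightarrow> (SUP t'\<in>{t/2..t}. G x t') \<le> C * G x t"
    and q_le: "AE x in M. AE x' in M. x \<in> E \<longrightarrow> x' \<in> cball x R - {x} \<longrightarrow>
                 q x x' \<le> G x (dist x x') + G x' (dist x x')"
  shows "(\<integral>\<^sup>+x\<in>E. (\<integral>\<^sup>+x'\<in>cball x r - {x}. q x x' * \<rho> (x, x') \<partial>M) \<partial>M)
    \<le> C * IU M E r \<rho> * (SUP t\<in>{0<..r}. \<integral>\<^sup>+x\<in>E0. G x t \<partial>M)"
proof -
  define G' where "G' x t = G x t * indicator E0 x" for x t
  have "(\<integral>\<^sup>+x\<in>E. (\<integral>\<^sup>+x'\<in>cball x r - {x}. q x x' * \<rho> (x, x') \<partial>M) \<partial>M)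
      \<le> C * IU M E r \<rho> * (SUP t\<in>{0<..r}. \<integral>\<^sup>+x. G' x t \<partial>M)"
  proof (rule nn_integral_kernel_le_IU)
    show "(\<lambda>x. G' x t) \<in> borel_measurable M" if "t \<in> {0<..r}" for t
      using G_meas r that unfolding G'_def
      by (subst (asm) borel_measurable_restrict_space_iff_ennreal) auto
    show "AE x in M. (SUP t'\<in>{t/2..t}. G' x t') \<le> C * G' x t" if "t \<in> {0<..r}" for t
    proof -
      have "AE x in M. x \<in> E0 \<longrightarrow> (SUP t'\<in>{t/2..t}. G x t') \<le> C * G x t"
        using G_doubling r that by auto
      moreover have "{t/2..t} \<noteq> {}"
        using that by auto
      ultimately show ?thesis
        by (elim eventually_mono) (auto simp: G'_def indicator_def)
    qed
    show "AE x in M. AE x' in M. x \<in> E \<longrightarrow> x' \<in> cball x r - {x} \<longrightarrow>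
        q x x' \<le> G' x (dist x x') + G' x' (dist x x')"
      using q_le
    proof (rule eventually_mono)
      fix x assume "AE x' in M. x \<in> E \<longrightarrow> x' \<in> cball x R - {x} \<longrightarrow>
        q x x' \<le> G x (dist x x') + G x' (dist x x')"
      then show "AE x' in M. x \<in> E \<longrightarrow> x' \<in> cball x r - {x} \<longrightarrow>
          q x x' \<le> G' x (dist x x') + G' x' (dist x x')"
        by (rule eventually_mono) (use r mem_of_closed_nbhd_subset[OF E0] in \<open>auto simp: G'_def\<close>)
    qed
  qed (use r in auto)
  then show ?thesis
    unfolding G'_def .
qed

text \<open>The diagonal may be an atom of \<open>M\<close>, but \<open>diffquot f x x = 0\<close> and \<open>0 powr p = 0\<close>.\<close>

lemma nn_integral_diffquot_cong_AE:
  assumes "AE z in M \<Otimes>\<^sub>M M. \<rho> z = \<rho>' z"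
  shows "(\<integral>\<^sup>+x\<in>E. (\<integral>\<^sup>+x'\<in>cball x r. ennreal (diffquot f x x' powr p) * \<rho> (x, x') \<partial>M) \<partial>M)
    = (\<integral>\<^sup>+x\<in>E. (\<integral>\<^sup>+x'\<in>cball x r - {x}. ennreal (diffquot f x x' powr p) * \<rho>' (x, x') \<partial>M) \<partial>M)"
proof -
  have "AE x in M. (\<integral>\<^sup>+x'\<in>cball x r. ennreal (diffquot f x x' powr p) * \<rho> (x, x') \<partial>M)
      = (\<integral>\<^sup>+x'\<in>cball x r - {x}. ennreal (diffquot f x x' powr p) * \<rho>' (x, x') \<partial>M)"
    using AE_sections_eq[OF assms]
  proof eventually_elim
    case (elim x)
    show ?case
      by (rule nn_integral_cong_AE) (use elim in \<open>eventually_elim, auto simp: diffquot_def indicator_def\<close>)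
  qed
  then show ?thesis
    by (rule nn_integral_cong_AE[OF eventually_mono]) simp
qed

end

theorem proposition3p6:
  fixes M :: "'a::metric_space measure"
    and \<rho> :: "'a \<times> 'a \<Rightarrow> ennreal"
    and E0 E :: "'a set"
    and f :: "'a \<Rightarrow> 'b::metric_space"
    and p R C :: real
    and G :: "'a \<Rightarrow> real \<Rightarrow> ennreal"
  assumes space: "space M = UNIV"
    and borel_sets: "sets borel \<subseteq> sets M"
    and complete: "complete_measure M"
    and loc_finite: "\<forall>x. \<exists>s>0. emeasure M (ball x s) < \<infinity>"
    and pos_measure: "emeasure M UNIV > 0"
    and separable: "\<exists>S::'a set. countable S \<and> closure S = UNIV"
    and loc_complete: "\<forall>x::'a. \<exists>s>0. Topological_Spaces.complete (cball x s)"
    and pos_diam: "\<exists>x y::'a. x \<noteq> y"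
    and p: "1 \<le> p"
    and \<rho>_meas: "\<rho> \<in> borel_measurable (completion (M \<Otimes>\<^sub>M M))"
    and E0_meas: "E0 \<in> sets M"
    and f_meas: "f \<in> meas_maps M E0"
    and E_meas: "E \<in> sets M"
    and E_in: "well_inside E E0"
    and R: "R > 0" "closed_nbhd E R \<subseteq> E0"
    and G_meas: "\<forall>r\<in>{0<..R}. (\<lambda>x. G x r) \<in> borel_measurable (restrict_space M E0)"
    and C: "C > 0"
    and G_doubling: "\<forall>r\<in>{0<..R}. AE x in M. x \<in> E0 \<longrightarrow>
                       (SUP r'\<in>{r/2..r}. G x r') \<le> ennreal C * G x r"
    and G_bound: "\<exists>D \<subseteq> E0 \<times> E0. (\<exists>N\<in>null_sets (M \<Otimes>\<^sub>M M). (E0 \<times> E0) - D \<subseteq> N) \<and>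
                   (\<forall>(x, x')\<in>D. x \<in> E \<longrightarrow> x' \<in> cball x R - {x} \<longrightarrow>
                      ennreal (diffquot f x x' powr p) \<le> G x (dist x x') + G x' (dist x x'))"
  shows "\<forall>r\<in>{0<..R}.
           (\<integral>\<^sup>+ x \<in> E. (\<integral>\<^sup>+ x' \<in> cball x r. ennreal (diffquot f x x' powr p) * \<rho> (x, x') \<partial>M) \<partial>M)
           \<le> ennreal C * IU M E r \<rho> * (SUP r'\<in>{0<..r}. \<integral>\<^sup>+ x \<in> E0. G x r' \<partial>M)"
proof
  fix r assume r: "r \<in> {0<..R}"
  have "sigma_finite_measure M"
    using space borel_sets loc_finite separable by (rule sigma_finite_measure_if_locally_finite_separable)
  then interpret separable_metric_measure M
    using space borel_sets separable
    by (simp add: separable_metric_measure_def separable_metric_measure_axioms_def)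
  obtain \<rho>' where \<rho>': "\<rho>' \<in> borel_measurable (M \<Otimes>\<^sub>M M)" and ae: "AE z in M \<Otimes>\<^sub>M M. \<rho> z = \<rho>' z"
    using completion_ex_borel_measurable[OF \<rho>_meas] by blast
  have "(\<integral>\<^sup>+ x \<in> E. (\<integral>\<^sup>+ x' \<in> cball x r. ennreal (diffquot f x x' powr p) * \<rho> (x, x') \<partial>M) \<partial>M)
      = (\<integral>\<^sup>+ x \<in> E. (\<integral>\<^sup>+ x' \<in> cball x r - {x}. ennreal (diffquot f x x' powr p) * \<rho>' (x, x') \<partial>M) \<partial>M)"
    using ae by (rule nn_integral_diffquot_cong_AE)
  also have "\<dots> \<le> ennreal C * IU M E r \<rho>' * (SUP r'\<in>{0<..r}. \<integral>\<^sup>+ x \<in> E0. G x r' \<partial>M)"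
    using \<rho>' E_meas E0_meas r R(2) G_meas G_doubling AE_AE_of_conull_subset[OF R(2) G_bound]
    by (intro nn_integral_kernel_le_IU_on) auto
  also have "IU M E r \<rho>' = IU M E r \<rho>"
    using ae by (rule IU_cong_AE[symmetric])
  finally show "(\<integral>\<^sup>+ x \<in> E. (\<integral>\<^sup>+ x' \<in> cball x r. ennreal (diffquot f x x' powr p) * \<rho> (x, x') \<partial>M) \<partial>M)
      \<le> ennreal C * IU M E r \<rho> * (SUP r'\<in>{0<..r}. \<integral>\<^sup>+ x \<in> E0. G x r' \<partial>M)" .
qed

end
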